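(* Let $P$ be a finite graded bowtie-free poset of rank $n$ with $\hat0,\hat1$ and a good $\mathcal{H}_n(0)$ action $U_1,\dots,U_{n-1}$, let $\mathfrak m_0$ be the unique maximal chain with empty descent set, and let $\mathfrak m\ne\mathfrak m_0$ be a maximal chain. Suppose $U_{i_1}\cdots U_{i_r}(\mathfrak m)=\mathfrak m_0$ and $U_{j_1}\cdots U_{j_s}(\mathfrak m)=\mathfrak m_0$ are both restless. Then there exist a word in the braid class of $U_{i_1}\cdots U_{i_r}$ and a word in the braid class of $U_{j_1}\cdots U_{j_s}$ which both end on the right with the same letter $U_i$.
   Context: Bowtie-free: no distinct $a,b,c,d$ with $a$ and $b$ each covering both $c$ and $d$. A good $\mathcal{H}_n(0)$ action is a family $U_1,\dots,U_{n-1}$ of maps on the set $\mathcal{M}(P)$ of maximal chains with: $U_i(\mathfrak m)$ agrees with $\mathfrak m$ except possibly at rank $i$; $U_i^2=U_i$; $U_iU_j=U_jU_i$ for $|i-j|\ge2$; $U_iU_{i+1}U_i=U_{i+1}U_iU_{i+1}$; and $\omega F_P=\mathrm{ch}(\chi_P)$ ($\chi_P$ the character of the $\mathcal{H}_n(0)$-module $\mathbb{C}\mathcal{M}(P)$ with $T_i=-U_i$, $F_P$ Ehrenborg's flag quasisymmetric function $\sum x_1^{\mathrm{rk}(t_0,t_1)}\cdots x_k^{\mathrm{rk}(t_{k-1},t_k)}$ over multichains $\hat0=t_0\le\cdots\le t_{k-1}<t_k=\hat1$, $\omega(L_{S,n})=L_{[n-1]\setminus S,n}$ on Gessel's fundamental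 quasisymmetric functions, $\mathrm{ch}(\chi_S)=L_{S,n}$ for the one-dimensional characters $\chi_S$: $T_i\mapsto-1$ for $i\in S$, $0$ otherwise). The descent set of $\mathfrak m$ is $\{i:U_i(\mathfrak m)\ne\mathfrak m\}$; such a $P$ has exactly one maximal chain $\mathfrak m_0$ with empty descent set. An expression $U_{i_1}\cdots U_{i_r}(\mathfrak m)=\mathfrak m'$ is restless if $U_{i_r}(\mathfrak m)\ne\mathfrak m$ and $U_{i_j}\cdots U_{i_r}(\mathfrak m)\ne U_{i_{j+1}}\cdots U_{i_r}(\mathfrak m)$ for $j=1,\dots,r-1$. Two words are in the same braid class if one is obtained from the other by repeatedly applying $U_aU_b\leftrightarrow U_bU_a$ ($|a-b|\ge2$) and $U_aU_{a+1}U_a\leftrightarrow U_{a+1}U_aU_{a+1}$. *)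

theory Defs
  imports Main
begin

definition plt :: "('a \<Rightarrow> 'a \<Rightarrow> bool) \<Rightarrow> 'a \<Rightarrow> 'a \<Rightarrow> bool" where
  "plt le x y \<longleftrightarrow> le x y \<and> x \<noteq> y"

definition is_poset :: "'a set \<Rightarrow> ('a \<Rightarrow> 'a \<Rightarrow> bool) \<Rightarrow> bool" where
  "is_poset P le \<longleftrightarrow>
     (\<forall>x\<in>P. le x x) \<and>
     (\<forall>x\<in>P. \<forall>y\<in>P. le x y \<and> le y x \<longrightarrow> x = y) \<and>
     (\<forall>x\<in>P. \<forall>y\<in>P. \<forall>z\<in>P. le x y \<and> le y z \<longrightarrow> le x z)"

definition covers :: "'a set \<Rightarrow> ('a \<Rightarrow> 'a \<Rightarrow> bool) \<Rightarrow> 'a \<Rightarrow> 'a \<Rightarrow> bool" where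
  "covers P le x y \<longleftrightarrow> x \<in> P \<and> y \<in> P \<and> plt le x y \<and> \<not> (\<exists>z\<in>P. plt le x z \<and> plt le z y)"

definition graded_bounded :: "'a set \<Rightarrow> ('a \<Rightarrow> 'a \<Rightarrow> bool) \<Rightarrow> 'a \<Rightarrow> 'a \<Rightarrow> ('a \<Rightarrow> nat) \<Rightarrow> nat \<Rightarrow> bool" where
  "graded_bounded P le zero_el one_el rho n \<longleftrightarrow>
     finite P \<and> is_poset P le \<and> zero_el \<in> P \<and> one_el \<in> P \<and>
     (\<forall>x\<in>P. le zero_el x \<and> le x one_el) \<and>
     rho zero_el = 0 \<and> rho one_el = n \<and>
     (\<forall>x y. covers P le x y \<longrightarrow> rho y = Suc (rho x))"

definition bowtie_free :: "'a set \<Rightarrow> ('a \<Rightarrow> 'a \<Rightarrow> bool) \<Rightarrow> bool" where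
  "bowtie_free P le \<longleftrightarrow>
     \<not> (\<exists>a b c d. distinct [a, b, c, d] \<and>
          covers P le c a \<and> covers P le d a \<and> covers P le c b \<and> covers P le d b)"

definition is_chain :: "'a set \<Rightarrow> ('a \<Rightarrow> 'a \<Rightarrow> bool) \<Rightarrow> 'a set \<Rightarrow> bool" where
  "is_chain P le C \<longleftrightarrow> C \<subseteq> P \<and> (\<forall>x\<in>C. \<forall>y\<in>C. le x y \<or> le y x)"

definition is_maximal_chain :: "'a set \<Rightarrow> ('a \<Rightarrow> 'a \<Rightarrow> bool) \<Rightarrow> 'a set \<Rightarrow> bool" where
  "is_maximal_chain P le C \<longleftrightarrow> is_chain P le C \<and> (\<forall>D. is_chain P le D \<and> C \<subseteq> D \<longrightarrow> D = C)"

text \<open>Maximal chains, each written as the strictly increasing list of its elements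
  (so in a graded poset of rank n, entry i is the element of rank i).\<close>
definition max_chains :: "'a set \<Rightarrow> ('a \<Rightarrow> 'a \<Rightarrow> bool) \<Rightarrow> 'a list set" where
  "max_chains P le = {m. sorted_wrt (plt le) m \<and> is_maximal_chain P le (set m)}"

definition apply_word :: "(nat \<Rightarrow> 'b \<Rightarrow> 'b) \<Rightarrow> nat list \<Rightarrow> 'b \<Rightarrow> 'b" where
  "apply_word U w m = foldr U w m"

definition restless :: "(nat \<Rightarrow> 'b \<Rightarrow> 'b) \<Rightarrow> nat list \<Rightarrow> 'b \<Rightarrow> bool" where
  "restless U w m \<longleftrightarrow>
     (\<forall>j < length w. apply_word U (drop j w) m \<noteq> apply_word U (drop (Suc j) w) m)"

definition descent_set :: "(nat \<Rightarrow> 'b \<Rightarrow> 'b) \<Rightarrow> nat \<Rightarrow> 'b \<Rightarrow> nat set" where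
  "descent_set U n m = {i \<in> {1..<n}. U i m \<noteq> m}"

inductive braid_step :: "nat list \<Rightarrow> nat list \<Rightarrow> bool" where
  comm: "a + 2 \<le> b \<or> b + 2 \<le> a \<Longrightarrow> braid_step (u @ [a, b] @ v) (u @ [b, a] @ v)"
| braid1: "braid_step (u @ [a, Suc a, a] @ v) (u @ [Suc a, a, Suc a] @ v)"
| braid2: "braid_step (u @ [Suc a, a, Suc a] @ v) (u @ [a, Suc a, a] @ v)"

text \<open>Same braid class: reflexive-transitive closure of braid moves (which are symmetric).\<close>
definition braid_equiv :: "nat list \<Rightarrow> nat list \<Rightarrow> bool" where
  "braid_equiv = braid_step\<^sup>*\<^sup>*"

text \<open>A monomial x_1^{alpha 0} x_2^{alpha 1} ... is encoded by alpha :: nat => nat;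
  a formal power series is its coefficient function.\<close>

text \<open>Ehrenborg's flag quasisymmetric function F_P: coefficient of the monomial alpha is
  the number of multichains zero_el = t_0 <= ... <= t_{k-1} < t_k = one_el (k >= 1)
  with alpha (j-1) = rk(t_{j-1}, t_j) for j = 1..k and alpha j = 0 for j >= k.\<close>
definition flag_F :: "'a set \<Rightarrow> ('a \<Rightarrow> 'a \<Rightarrow> bool) \<Rightarrow> 'a \<Rightarrow> 'a \<Rightarrow> ('a \<Rightarrow> nat) \<Rightarrow> (nat \<Rightarrow> nat) \<Rightarrow> int" where
  "flag_F P le zero_el one_el rho alpha = int (card {ts.
      2 \<le> length ts \<and> set ts \<subseteq> P \<and> hd ts = zero_el \<and> last ts = one_el \<and>
      (\<forall>j. Suc j < length ts \<longrightarrow> le (ts ! j) (ts ! Suc j)) \<and>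
      plt le (ts ! (length ts - 2)) (last ts) \<and>
      (\<forall>j. alpha j = (if Suc j < length ts then rho (ts ! Suc j) - rho (ts ! j) else 0))})"

text \<open>Gessel's fundamental quasisymmetric function L_{S,n}
  = sum over i_1 <= ... <= i_n with i_j < i_{j+1} for j in S of x_{i_1} ... x_{i_n}
  (variable x_{v+1} encoded by v).\<close>
definition fundL :: "nat \<Rightarrow> nat set \<Rightarrow> (nat \<Rightarrow> nat) \<Rightarrow> int" where
  "fundL n S alpha = int (card {ix :: nat list.
      length ix = n \<and>
      (\<forall>j. Suc j < n \<longrightarrow> ix ! j \<le> ix ! Suc j) \<and>
      (\<forall>j\<in>S. 1 \<le> j \<and> j < n \<longrightarrow> ix ! (j - 1) < ix ! j) \<and>
      (\<forall>v. alpha v = count_list ix v)})"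

text \<open>omega applied to ch = (sum_S c S * L_{S,n}); omega(L_{S,n}) = L_{[n-1]-S,n}.\<close>
definition omega_ch :: "nat \<Rightarrow> (nat set \<Rightarrow> int) \<Rightarrow> (nat \<Rightarrow> nat) \<Rightarrow> int" where
  "omega_ch n c alpha = (\<Sum>S\<in>Pow {1..<n}. c S * fundL n ({1..<n} - S) alpha)"

text \<open>The character chi_P of C M(P) (with T_i = -U_i) is written as sum_S c S * chi_S,
  tested on all products T_{i_1}...T_{i_r} (which span H_n(0)); the signs (-1)^r on both
  sides cancel, the trace of U_{i_1}...U_{i_r} on C M(P) is its number of fixed maximal
  chains, and chi_S(T_{i_1}...T_{i_r}) = (-1)^r [all i_j in S].
  Then ch(chi_P) = sum_S c S * L_{S,n}.\<close>
definition good_action ::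
  "'a set \<Rightarrow> ('a \<Rightarrow> 'a \<Rightarrow> bool) \<Rightarrow> 'a \<Rightarrow> 'a \<Rightarrow> ('a \<Rightarrow> nat) \<Rightarrow> nat \<Rightarrow> (nat \<Rightarrow> 'a list \<Rightarrow> 'a list) \<Rightarrow> bool" where
  "good_action P le zero_el one_el rho n U \<longleftrightarrow>
     (\<forall>i\<in>{1..<n}. \<forall>m\<in>max_chains P le.
        U i m \<in> max_chains P le \<and> (\<forall>j. j \<noteq> i \<longrightarrow> U i m ! j = m ! j) \<and> U i (U i m) = U i m) \<and>
     (\<forall>i\<in>{1..<n}. \<forall>j\<in>{1..<n}. (i + 2 \<le> j \<or> j + 2 \<le> i) \<longrightarrow>
        (\<forall>m\<in>max_chains P le. U i (U j m) = U j (U i m))) \<and>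
     (\<forall>i. 1 \<le> i \<and> Suc i < n \<longrightarrow>
        (\<forall>m\<in>max_chains P le. U i (U (Suc i) (U i m)) = U (Suc i) (U i (U (Suc i) m)))) \<and>
     (\<exists>c :: nat set \<Rightarrow> int.
        (\<forall>w. set w \<subseteq> {1..<n} \<longrightarrow>
           int (card {m \<in> max_chains P le. apply_word U w m = m})
             = (\<Sum>S\<in>Pow {1..<n}. if set w \<subseteq> S then c S else 0)) \<and>
        (\<forall>alpha. omega_ch n c alpha = flag_F P le zero_el one_el rho alpha))"

end

theory Submission
  imports Defs
begin

(* Call i a descent of x if U_i x \<noteq> x. If k is a descent of m, every restless word
   from m to the fixed chain m0 is braid equivalent to a restless word ending in k, which
   applied to the last letter of one of the two words gives the theorem. The proof is by
   induction on the length: if the word ends in i \<noteq> k, then k is still a descent of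
   U_i m, so by induction k can be moved to the right end of the rest, and a commutation
   (|i - k| \<ge> 2) or a braid move (|i - k| = 1, after moving i to the end once more) makes k
   the last letter. That descents survive in this way is clear when |i - k| \<ge> 2, since U_i
   only changes rank i; for |i - k| = 1 it is where bowtie-freeness enters: otherwise the
   ranks i and k of the four chains m, U_i m, U_k m, U_i U_k m would form a bowtie. *)

lemma apply_word_Nil [simp]: "apply_word U [] x = x"
  by (simp add: apply_word_def)

lemma apply_word_Cons [simp]: "apply_word U (i # w) x = U i (apply_word U w x)"
  by (simp add: apply_word_def)

lemma apply_word_append [simp]: "apply_word U (w @ u) x = apply_word U w (apply_word U u x)"
  by (simp add: apply_word_def)

lemma restless_Nil [simp]: "restless U [] x"
  by (simp add: restless_def)

lemma restless_Cons [simp]: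
  "restless U (i # w) x \<longleftrightarrow> U i (apply_word U w x) \<noteq> apply_word U w x \<and> restless U w x"
  by (auto simp: restless_def less_Suc_eq_0_disj)

lemma restless_append [simp]:
  "restless U (w @ u) x \<longleftrightarrow> restless U u x \<and> restless U w (apply_word U u x)"
  by (induction w) auto

lemma braid_step_length_set: "braid_step u v \<Longrightarrow> length u = length v \<and> set u = set v"
  by (induction rule: braid_step.induct) auto

lemma braid_equiv_length_set: "braid_equiv u v \<Longrightarrow> length u = length v \<and> set u = set v"
  unfolding braid_equiv_def
  by (induction rule: rtranclp_induct) (auto dest: braid_step_length_set)

lemma braid_step_append: "braid_step u v \<Longrightarrow> braid_step (u @ z) (v @ z)"
  by (induction rule: braid_step.induct) (auto intro: braid_step.intros[where v = "_ @ z", simplified])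

lemma braid_equiv_append: "braid_equiv u v \<Longrightarrow> braid_equiv (u @ z) (v @ z)"
  unfolding braid_equiv_def
  by (induction rule: rtranclp_induct) (auto intro: rtranclp.rtrancl_into_rtrancl braid_step_append)

lemma braid_equiv_refl [simp]: "braid_equiv u u"
  by (simp add: braid_equiv_def)

lemma braid_equiv_trans [trans]: "braid_equiv u v \<Longrightarrow> braid_equiv v w \<Longrightarrow> braid_equiv u w"
  unfolding braid_equiv_def by simp

lemma braid_equiv_commute_last:
  "a + 2 \<le> b \<or> b + 2 \<le> a \<Longrightarrow> braid_equiv (v @ [a, b]) (v @ [b, a])"
  unfolding braid_equiv_def using braid_step.comm[of a b v "[]"] by auto

lemma braid_equiv_braid_last:
  "b = Suc a \<or> a = Suc b \<Longrightarrow> braid_equiv (v @ [a, b, a]) (v @ [b, a, b])"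
  unfolding braid_equiv_def using braid_step.braid1[of v a "[]"] braid_step.braid2[of v b "[]"]
  by auto

locale descent_stable_action =
  fixes X :: "'b set" and I :: "nat set" and U :: "nat \<Rightarrow> 'b \<Rightarrow> 'b"
  assumes closed: "i \<in> I \<Longrightarrow> x \<in> X \<Longrightarrow> U i x \<in> X"
    and commute: "i \<in> I \<Longrightarrow> j \<in> I \<Longrightarrow> i + 2 \<le> j \<or> j + 2 \<le> i \<Longrightarrow> x \<in> X \<Longrightarrow>
      U i (U j x) = U j (U i x)"
    and braid: "i \<in> I \<Longrightarrow> j \<in> I \<Longrightarrow> j = Suc i \<or> i = Suc j \<Longrightarrow> x \<in> X \<Longrightarrow>
      U i (U j (U i x)) = U j (U i (U j x))"
    and descent_persists: "i \<in> I \<Longrightarrow> j \<in> I \<Longrightarrow> i \<noteq> j \<Longrightarrow> x \<in> X \<Longrightarrow>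
      U i x \<noteq> x \<Longrightarrow> U j x \<noteq> x \<Longrightarrow> U j (U i x) \<noteq> U i x"
    and descent_braid: "i \<in> I \<Longrightarrow> j \<in> I \<Longrightarrow> j = Suc i \<or> i = Suc j \<Longrightarrow> x \<in> X \<Longrightarrow>
      U i x \<noteq> x \<Longrightarrow> U j x \<noteq> x \<Longrightarrow> U i (U j (U i x)) \<noteq> U j (U i x)"
begin

lemma restless_commute_last:
  assumes "i \<in> I" "k \<in> I" and far: "i + 2 \<le> k \<or> k + 2 \<le> i" and "x \<in> X"
    and "U i x \<noteq> x" "U k x \<noteq> x" and "restless U v (U k (U i x))"
  shows "restless U (v @ [i, k]) x \<and> apply_word U (v @ [i, k]) x = apply_word U (v @ [k, i]) x"
  using assms commute[OF assms(1,2) far] descent_persists[OF assms(2,1) _ assms(4,6,5)] by auto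

lemma restless_braid_last:
  assumes "i \<in> I" "k \<in> I" and adj: "k = Suc i \<or> i = Suc k" and "x \<in> X"
    and "U i x \<noteq> x" "U k x \<noteq> x" and "restless U u (U i (U k (U i x)))"
  shows "restless U (u @ [k, i, k]) x \<and>
    apply_word U (u @ [k, i, k]) x = apply_word U (u @ [i, k, i]) x"
  using assms braid[OF assms(2,1) _ assms(4)] descent_persists[OF assms(2,1) _ assms(4,6,5)]
    descent_braid[OF assms(2,1) _ assms(4,6,5)] by auto

lemma restless_braid_equiv_snoc:
  assumes "x \<in> X" "set w \<subseteq> I" "restless U w x" "apply_word U w x = y"
    and fixed: "\<And>i. i \<in> I \<Longrightarrow> U i y = y"
    and "k \<in> I" "U k x \<noteq> x"
  shows "\<exists>v. braid_equiv w (v @ [k]) \<and> restless U (v @ [k]) x \<and> apply_word U (v @ [k]) x = y"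
  using assms
proof (induction "length w" arbitrary: w x k rule: less_induct)
  case less
  show ?case
  proof (cases w rule: rev_exhaust)
    case Nil
    with less.prems show ?thesis by simp
  next
    case (snoc w' i)
    have i: "i \<in> I" and di: "U i x \<noteq> x" and x1: "U i x \<in> X"
      using less.prems snoc closed by auto
    have IH: "\<exists>v. braid_equiv u (v @ [l]) \<and> restless U (v @ [l]) z \<and> apply_word U (v @ [l]) z = y"
      if "length u < length w" "z \<in> X" "set u \<subseteq> I" "restless U u z" "apply_word U u z = y"
        "l \<in> I" "U l z \<noteq> z" for u z l
      using less.hyps that fixed by blast
    show ?thesis
    proof (cases "i = k")
      case True
      with less.prems snoc show ?thesis by (intro exI[of _ w']) auto
    next
      case False
      then have "U k (U i x) \<noteq> U i x"
        using descent_persists[OF i \<open>k \<in> I\<close> _ \<open>x \<in> X\<close> di \<open>U k x \<noteq> x\<close>] by blast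
      then obtain v where v: "braid_equiv w' (v @ [k])"
        "restless U (v @ [k]) (U i x)" "apply_word U (v @ [k]) (U i x) = y"
        using IH[of w' "U i x" k] less.prems snoc x1 by fastforce
      have w: "braid_equiv w (v @ [k, i])"
        using braid_equiv_append[OF v(1), of "[i]"] snoc by simp
      consider (far) "i + 2 \<le> k \<or> k + 2 \<le> i" | (adj) "k = Suc i \<or> i = Suc k"
        using False by linarith
      then show ?thesis
      proof cases
        case far
        note w
        also have "braid_equiv (v @ [k, i]) ((v @ [i]) @ [k])"
          using braid_equiv_commute_last[of k i v] far by auto
        finally show ?thesis
          using restless_commute_last[OF i \<open>k \<in> I\<close> far \<open>x \<in> X\<close> di \<open>U k x \<noteq> x\<close>, of v] v
          by (intro exI[of _ "v @ [i]"]) auto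
      next
        case adj
        let ?x2 = "U k (U i x)"
        have "length v < length w" "set v \<subseteq> I"
          using braid_equiv_length_set[OF v(1)] less.prems snoc by auto
        moreover have "U i ?x2 \<noteq> ?x2"
          using descent_braid[OF i \<open>k \<in> I\<close> adj \<open>x \<in> X\<close> di \<open>U k x \<noteq> x\<close>] .
        ultimately obtain u where u: "braid_equiv v (u @ [i])" "restless U (u @ [i]) ?x2"
          "apply_word U (u @ [i]) ?x2 = y"
          using IH[of v ?x2 i] v closed[OF \<open>k \<in> I\<close> x1] i by auto
        note w
        also have "braid_equiv (v @ [k, i]) (u @ [i, k, i])"
          using braid_equiv_append[OF u(1), of "[k, i]"] by simp
        also have "braid_equiv \<dots> ((u @ [k, i]) @ [k])"
          using braid_equiv_braid_last[of k i u] adj by auto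
        finally show ?thesis
          using restless_braid_last[OF i \<open>k \<in> I\<close> adj \<open>x \<in> X\<close> di \<open>U k x \<noteq> x\<close>, of u] u
          by (intro exI[of _ "u @ [k, i]"]) auto
      qed
    qed
  qed
qed

lemma restless_words_braid_equiv_same_last:
  assumes "x \<in> X" "x \<noteq> y" and fixed: "\<And>i. i \<in> I \<Longrightarrow> U i y = y"
    and "set w \<subseteq> I" "apply_word U w x = y" "restless U w x"
    and "set w' \<subseteq> I" "apply_word U w' x = y" "restless U w' x"
  shows "\<exists>u u'. braid_equiv w u \<and> braid_equiv w' u' \<and> u \<noteq> [] \<and> u' \<noteq> [] \<and> last u = last u'"
proof (cases w rule: rev_exhaust)
  case Nil
  with assms show ?thesis by simp
next
  case (snoc v k)
  with assms have "k \<in> I" "U k x \<noteq> x" by auto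
  then obtain v' where "braid_equiv w' (v' @ [k])"
    using restless_braid_equiv_snoc[OF assms(1,7,9,8) fixed] by blast
  with snoc show ?thesis by (intro exI[of _ w] exI[of _ "v' @ [k]"]) auto
qed

end

locale poset_on =
  fixes P :: "'a set" and le :: "'a \<Rightarrow> 'a \<Rightarrow> bool"
  assumes is_poset: "is_poset P le"
begin

lemma poset_refl: "x \<in> P \<Longrightarrow> le x x"
  and poset_antisym: "x \<in> P \<Longrightarrow> y \<in> P \<Longrightarrow> le x y \<Longrightarrow> le y x \<Longrightarrow> x = y"
  and poset_trans: "x \<in> P \<Longrightarrow> y \<in> P \<Longrightarrow> z \<in> P \<Longrightarrow> le x y \<Longrightarrow> le y z \<Longrightarrow> le x z"
  using is_poset unfolding is_poset_def by blast+

context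
  fixes m assumes m: "m \<in> max_chains P le"
begin

lemma max_chain_subset: "set m \<subseteq> P"
  using m by (simp add: max_chains_def is_maximal_chain_def is_chain_def)

lemma max_chain_nth_less: "k < l \<Longrightarrow> l < length m \<Longrightarrow> plt le (m ! k) (m ! l)"
  using m by (simp add: max_chains_def sorted_wrt_iff_nth_less)

lemma max_chain_nth_le: "k \<le> l \<Longrightarrow> l < length m \<Longrightarrow> le (m ! k) (m ! l)"
  using max_chain_nth_less[of k l] max_chain_subset
  by (cases "k = l") (auto simp: plt_def intro!: poset_refl)

lemma max_chain_mem_if_comparable:
  assumes "z \<in> P" and "\<forall>y\<in>set m. le y z \<or> le z y"
  shows "z \<in> set m"
proof -
  have "is_chain P le (insert z (set m))"
    using m assms poset_refl unfolding max_chains_def is_maximal_chain_def is_chain_def by auto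
  then show ?thesis
    using m unfolding max_chains_def is_maximal_chain_def by blast
qed

lemma max_chain_nth_covers:
  assumes k: "Suc k < length m"
  shows "covers P le (m ! k) (m ! Suc k)"
proof -
  have P: "l < length m \<Longrightarrow> m ! l \<in> P" for l
    using max_chain_subset by auto
  have "\<not> (plt le (m ! k) z \<and> plt le z (m ! Suc k))" if z: "z \<in> P" for z
  proof
    assume between: "plt le (m ! k) z \<and> plt le z (m ! Suc k)"
    have below: "le (m ! l) z" if "l \<le> k" for l
      using poset_trans[of "m ! l" "m ! k" z] P[of l] P[of k] z max_chain_nth_le[of l k] that k between
      by (simp add: plt_def)
    have above: "le z (m ! l)" if "Suc k \<le> l" "l < length m" for l
      using poset_trans[of z "m ! Suc k" "m ! l"] P[of l] P[of "Suc k"] z max_chain_nth_le[of "Suc k" l]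
        that k between
      by (simp add: plt_def)
    have "\<forall>y\<in>set m. le y z \<or> le z y"
      using below above by (auto simp: in_set_conv_nth) (metis not_less_eq_eq)
    then obtain l where l: "l < length m" "z = m ! l"
      using max_chain_mem_if_comparable[OF z] by (auto simp: in_set_conv_nth)
    show False
    proof (cases "l \<le> k")
      case True
      then show False
        using poset_antisym[of "m ! k" z] max_chain_nth_le[of l k] P[of k] z between l k
        by (auto simp: plt_def)
    next
      case False
      then show False
        using poset_antisym[of z "m ! Suc k"] max_chain_nth_le[of "Suc k" l] P[of "Suc k"] z between l
        by (auto simp: plt_def)
    qed
  qed
  then show ?thesis
    using P k max_chain_nth_less[of k "Suc k"] by (auto simp: covers_def)
qed

end

end

locale graded_bounded_poset =
  fixes P :: "'a set" and le :: "'a \<Rightarrow> 'a \<Rightarrow> bool" and zero_el one_el :: 'a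
    and rho :: "'a \<Rightarrow> nat" and n :: nat
  assumes graded_bounded: "graded_bounded P le zero_el one_el rho n"

sublocale graded_bounded_poset \<subseteq> poset_on
  using graded_bounded by unfold_locales (simp add: graded_bounded_def)

context graded_bounded_poset
begin

context
  fixes m assumes m: "m \<in> max_chains P le"
begin

lemma max_chain_hd: "m \<noteq> [] \<and> hd m = zero_el"
proof -
  have "zero_el \<in> set m"
    using graded_bounded max_chain_subset[OF m]
    by (intro max_chain_mem_if_comparable[OF m]) (auto simp: graded_bounded_def)
  then obtain a m' where "m = a # m'" "zero_el = a \<or> zero_el \<in> set m'"
    by (cases m) auto
  moreover have "le zero_el a" "a \<in> P"
    using graded_bounded max_chain_subset[OF m] \<open>m = a # m'\<close> by (auto simp: graded_bounded_def)
  ultimately show ?thesis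
    using m poset_antisym[of a zero_el] graded_bounded
    by (auto simp: max_chains_def plt_def graded_bounded_def)
qed

lemma max_chain_last: "last m = one_el"
proof -
  have "one_el \<in> set m"
    using graded_bounded max_chain_subset[OF m]
    by (intro max_chain_mem_if_comparable[OF m]) (auto simp: graded_bounded_def)
  then obtain m' a where "m = m' @ [a]" "one_el = a \<or> one_el \<in> set m'"
    by (cases m rule: rev_exhaust) auto
  moreover have "le a one_el" "a \<in> P"
    using graded_bounded max_chain_subset[OF m] \<open>m = m' @ [a]\<close> by (auto simp: graded_bounded_def)
  ultimately show ?thesis
    using m poset_antisym[of a one_el] graded_bounded
    by (auto simp: max_chains_def plt_def graded_bounded_def sorted_wrt_append)
qed

lemma max_chain_rank: "k < length m \<Longrightarrow> rho (m ! k) = k"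
proof (induction k)
  case 0
  then show ?case
    using max_chain_hd graded_bounded by (simp add: hd_conv_nth[symmetric] graded_bounded_def)
next
  case (Suc k)
  then show ?case
    using max_chain_nth_covers[OF m, of k] graded_bounded by (simp add: graded_bounded_def)
qed

lemma max_chain_length: "length m = Suc n"
proof -
  have "rho (last m) = length m - 1"
    using max_chain_hd max_chain_rank[of "length m - 1"] by (simp add: last_conv_nth)
  then show ?thesis
    using max_chain_hd max_chain_last graded_bounded by (cases m) (auto simp: graded_bounded_def)
qed

end

end

lemma bowtie_freeD:
  assumes "bowtie_free P le"
    and "covers P le c a" "covers P le d a" "covers P le c b" "covers P le d b" "a \<noteq> b"
  shows "c = d"
proof (rule ccontr)
  assume "c \<noteq> d"
  with assms(2-6) have "distinct [a, b, c, d]"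
    by (auto simp: covers_def plt_def)
  with assms(1-5) show False
    unfolding bowtie_free_def by blast
qed

locale graded_chain_action = graded_bounded_poset +
  fixes U :: "nat \<Rightarrow> 'a list \<Rightarrow> 'a list"
  assumes U_closed: "i \<in> {1..<n} \<Longrightarrow> m \<in> max_chains P le \<Longrightarrow> U i m \<in> max_chains P le"
    and U_nth_other: "i \<in> {1..<n} \<Longrightarrow> m \<in> max_chains P le \<Longrightarrow> j \<noteq> i \<Longrightarrow> U i m ! j = m ! j"
    and U_idem: "i \<in> {1..<n} \<Longrightarrow> m \<in> max_chains P le \<Longrightarrow> U i (U i m) = U i m"
    and U_commute: "i \<in> {1..<n} \<Longrightarrow> j \<in> {1..<n} \<Longrightarrow> i + 2 \<le> j \<or> j + 2 \<le> i \<Longrightarrow>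
      m \<in> max_chains P le \<Longrightarrow> U i (U j m) = U j (U i m)"
    and U_braid: "1 \<le> i \<Longrightarrow> Suc i < n \<Longrightarrow> m \<in> max_chains P le \<Longrightarrow>
      U i (U (Suc i) (U i m)) = U (Suc i) (U i (U (Suc i) m))"
begin

lemma U_braid_adjacent:
  "i \<in> {1..<n} \<Longrightarrow> j \<in> {1..<n} \<Longrightarrow> j = Suc i \<or> i = Suc j \<Longrightarrow> m \<in> max_chains P le \<Longrightarrow>
    U i (U j (U i m)) = U j (U i (U j m))"
  using U_braid by auto

lemma U_nth_ne:
  assumes i: "i \<in> {1..<n}" and m: "m \<in> max_chains P le" and "U i m \<noteq> m"
  shows "U i m ! i \<noteq> m ! i"
proof
  assume "U i m ! i = m ! i"
  then have "U i m ! j = m ! j" for j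
    using U_nth_other[OF i m] by (cases "j = i") auto
  then have "U i m = m"
    using max_chain_length[OF m] max_chain_length[OF U_closed[OF i m]] by (simp add: nth_equalityI)
  with \<open>U i m \<noteq> m\<close> show False ..
qed

lemma far_descent_persists:
  assumes p: "p \<in> {1..<n}" and q: "q \<in> {1..<n}" and far: "p + 2 \<le> q \<or> q + 2 \<le> p"
    and m: "m \<in> max_chains P le" and "U q m \<noteq> m"
  shows "U q (U p m) \<noteq> U p m"
proof
  assume "U q (U p m) = U p m"
  then have "U p (U q m) = U p m"
    using U_commute[OF p q far m] by simp
  then have "U q m ! q = m ! q"
    using U_nth_other[OF p U_closed[OF q m], of q] U_nth_other[OF p m, of q] far by auto
  then show False
    using U_nth_ne[OF q m \<open>U q m \<noteq> m\<close>] by simp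
qed

lemma adjacent_descents_nth_ne:
  assumes bowtie_free: "bowtie_free P le"
    and p: "p \<in> {1..<n}" and q: "q \<in> {1..<n}" and adj: "q = Suc p \<or> p = Suc q"
    and m: "m \<in> max_chains P le" and dp: "U p m \<noteq> m" and dq: "U q m \<noteq> m"
  shows "U p (U q m) ! p \<noteq> U p m ! p"
proof
  assume e: "U p (U q m) ! p = U p m ! p"
  have cover: "covers P le (c ! k) (c ! Suc k)" if "c \<in> max_chains P le" "Suc k \<le> n" for c k
    using max_chain_nth_covers[OF that(1)] max_chain_length[OF that(1)] that(2) by simp
  have chains: "U p m \<in> max_chains P le" "U q m \<in> max_chains P le"
    "U p (U q m) \<in> max_chains P le"
    using U_closed p q m by blast+
  have a: "U p m ! p \<noteq> m ! p" and b: "U q m ! q \<noteq> m ! q"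
    using U_nth_ne p q m dp dq by blast+
  have fixed: "U p m ! q = m ! q" "U q m ! p = m ! p" "U p (U q m) ! q = U q m ! q"
    using U_nth_other p q m chains adj by auto
  (* For q = p + 1, both m ! p and U p m ! p are covered by both m ! q and U q m ! q, as read
     off the chains m, U p m, U q m and U p (U q m); for p = q + 1 dually. *)
  show False
  proof (cases "q = Suc p")
    case True
    then have "m ! p = U p m ! p"
      using bowtie_freeD[OF bowtie_free, of "m ! p" "m ! q" "U p m ! p" "U q m ! q"]
        cover[OF m, of p] cover[OF chains(1), of p] cover[OF chains(2), of p]
        cover[OF chains(3), of p] q e fixed b by auto
    with a show False by simp
  next
    case False
    with adj have "p = Suc q" by simp
    then have "m ! q = U q m ! q"
      using bowtie_freeD[OF bowtie_free, of "m ! q" "m ! p" "U q m ! q" "U p m ! p"]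
        cover[OF m, of q] cover[OF chains(1), of q] cover[OF chains(2), of q]
        cover[OF chains(3), of q] p e fixed a by auto
    with b show False by simp
  qed
qed

lemma adjacent_descent_persists:
  assumes "bowtie_free P le" and p: "p \<in> {1..<n}" and q: "q \<in> {1..<n}"
    and adj: "q = Suc p \<or> p = Suc q"
    and m: "m \<in> max_chains P le" and "U p m \<noteq> m" "U q m \<noteq> m"
  shows "U q (U p m) \<noteq> U p m"
proof
  assume "U q (U p m) = U p m"
  then have "U q (U p (U q m)) = U p m"
    using U_braid_adjacent[OF p q adj m] U_idem[OF p m] by simp
  then have "U p (U q m) ! p = U p m ! p"
    using U_nth_other[OF q U_closed[OF p U_closed[OF q m]], of p] adj by auto
  then show False
    using adjacent_descents_nth_ne assms by blast
qed

lemma adjacent_descent_braid: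
  assumes "bowtie_free P le" and p: "p \<in> {1..<n}" and q: "q \<in> {1..<n}"
    and adj: "q = Suc p \<or> p = Suc q"
    and m: "m \<in> max_chains P le" and "U p m \<noteq> m" "U q m \<noteq> m"
  shows "U p (U q (U p m)) \<noteq> U q (U p m)"
proof
  assume "U p (U q (U p m)) = U q (U p m)"
  then have "U q (U p (U q m)) = U q (U p m)"
    using U_braid_adjacent[OF p q adj m] by simp
  then have "U p (U q m) ! p = U p m ! p"
    using U_nth_other[OF q U_closed[OF p U_closed[OF q m]], of p]
      U_nth_other[OF q U_closed[OF p m], of p] adj by auto
  then show False
    using adjacent_descents_nth_ne assms by blast
qed

lemma descent_stable_action_if_bowtie_free:
  assumes "bowtie_free P le"
  shows "descent_stable_action (max_chains P le) {1..<n} U"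
proof
  fix i j m
  assume ij: "i \<in> {1..<n}" "j \<in> {1..<n}" "i \<noteq> j" and m: "m \<in> max_chains P le"
    and "U i m \<noteq> m" "U j m \<noteq> m"
  consider "i + 2 \<le> j \<or> j + 2 \<le> i" | "j = Suc i \<or> i = Suc j"
    using ij(3) by linarith
  then show "U j (U i m) \<noteq> U i m"
    using far_descent_persists[OF ij(1,2) _ m] adjacent_descent_persists[OF assms ij(1,2) _ m]
      \<open>U i m \<noteq> m\<close> \<open>U j m \<noteq> m\<close> by cases auto
qed (fact U_closed U_commute U_braid_adjacent adjacent_descent_braid[OF assms])+

end

theorem mainTheorem11:
  fixes P :: "'a set" and le :: "'a \<Rightarrow> 'a \<Rightarrow> bool" and zero_el one_el :: 'a
    and rho :: "'a \<Rightarrow> nat" and n :: nat and U :: "nat \<Rightarrow> 'a list \<Rightarrow> 'a list"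
    and m0 m :: "'a list" and iw jw :: "nat list"
  assumes "graded_bounded P le zero_el one_el rho n"
    and "bowtie_free P le"
    and "good_action P le zero_el one_el rho n U"
    and "m0 \<in> max_chains P le" and "descent_set U n m0 = {}"
    and "m \<in> max_chains P le" and "m \<noteq> m0"
    and "set iw \<subseteq> {1..<n}" and "apply_word U iw m = m0" and "restless U iw m"
    and "set jw \<subseteq> {1..<n}" and "apply_word U jw m = m0" and "restless U jw m"
  shows "\<exists>w1 w2. braid_equiv iw w1 \<and> braid_equiv jw w2 \<and> w1 \<noteq> [] \<and> w2 \<noteq> [] \<and> last w1 = last w2"
proof -
  interpret graded_chain_action P le zero_el one_el rho n U
    using assms(1,3) by unfold_locales (auto simp: good_action_def)
  interpret descent_stable_action "max_chains P le" "{1..<n}" U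
    using assms(2) by (rule descent_stable_action_if_bowtie_free)
  have "U i m0 = m0" if "i \<in> {1..<n}" for i
    using assms(5) that by (auto simp: descent_set_def)
  then show ?thesis
    by (rule restless_words_braid_equiv_same_last[OF assms(6,7) _ assms(8-13)])
qed

end
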